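(* If a hard-core configuration $\sigma\in\mathcal{X}$ satisfies $\Delta H(\sigma)<L$, then there exists a path $\omega:\sigma\to\{\mathrm{e},\mathrm{o}\}$ with $\Phi_\omega\le H(\sigma)+1$. In particular, either $\sigma\in C_{\mathrm{e}}$ or $\sigma\in C_{\mathrm{o}}$.
   Context: $L\ge6$ even; $\Lambda=(V,E)$ is the $L\times L$ toric grid graph ($V=\{0,\dots,L-1\}^2$, adjacency = difference $\pm1$ mod $L$ in exactly one coordinate); even/odd sites by parity of coordinate sum. $\mathcal{X}=\{\sigma\in\{0,1\}^V:\sigma(v)\sigma(w)=0$ for adjacent $v,w\}$, $H(\sigma)=-\sum_v\sigma(v)$; $\mathrm{e}$ ($\mathrm{o}$) is the configuration with particles exactly on the even (odd) sites, $H(\mathrm{e})=H(\mathrm{o})=-L^2/2$, and $\Delta H(\sigma)=H(\sigma)-H(\mathrm{e})$. A path is a finite sequence of configurations in $\mathcal{X}$ in which consecutive configurations differ at exactly one site; its height is $\Phi_\omega=\max_{\eta\in\omega}H(\eta)$; a path $\sigma\to\{\mathrm{e},\mathrm{o}\}$ ends in $\mathrm{e}$ or $\mathrm{o}$. $\Phi(\sigma,\sigma')=\min_{\omega:\sigma\to\sigma'}\Phi_\omega$. It is known that $\Phi(\mathrm{e},\mathrm{o})-H(\mathrm{e})=L+1$. The initial cycles are $C_{\mathrm{e}}=\{\zeta\in\mathcal{X}:\Phi(\zeta,\mathrm{e})<\Phi(\mathrm{e},\mathrm{o})\}$ and $C_{\mathrm{o}}=\{\zeta\in\mathcal{X}:\Phi(\zeta,\mathrm{o})<\Phi(\mathrm{e},\mathrm{o})\}$.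 *)

theory Defs
  imports Main
begin

type_synonym site = "nat \<times> nat"
type_synonym config = "site set"   (* set of occupied sites *)

definition sites :: "nat \<Rightarrow> site set" where
  "sites L = {0..<L} \<times> {0..<L}"

definition cyc_nb :: "nat \<Rightarrow> nat \<Rightarrow> nat \<Rightarrow> bool" where
  "cyc_nb L a b \<longleftrightarrow> b = (a + 1) mod L \<or> a = (b + 1) mod L"

definition adj :: "nat \<Rightarrow> site \<Rightarrow> site \<Rightarrow> bool" where
  "adj L v w \<longleftrightarrow> v \<in> sites L \<and> w \<in> sites L \<and>
     ((fst v = fst w \<and> cyc_nb L (snd v) (snd w)) \<or> (snd v = snd w \<and> cyc_nb L (fst v) (fst w)))"

definition hc :: "nat \<Rightarrow> config set" where
  "hc L = {\<sigma>. \<sigma> \<subseteq> sites L \<and> (\<forall>v\<in>\<sigma>. \<forall>w\<in>\<sigma>. \<not> adj L v w)}"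

definition H :: "config \<Rightarrow> int" where
  "H \<sigma> = - int (card \<sigma>)"

definition even_conf :: "nat \<Rightarrow> config" where
  "even_conf L = {v \<in> sites L. even (fst v + snd v)}"

definition odd_conf :: "nat \<Rightarrow> config" where
  "odd_conf L = {v \<in> sites L. odd (fst v + snd v)}"

definition DeltaH :: "nat \<Rightarrow> config \<Rightarrow> int" where
  "DeltaH L \<sigma> = H \<sigma> - H (even_conf L)"

definition is_path :: "nat \<Rightarrow> config list \<Rightarrow> bool" where
  "is_path L \<omega> \<longleftrightarrow> \<omega> \<noteq> [] \<and> set \<omega> \<subseteq> hc L \<and>
     (\<forall>i. Suc i < length \<omega> \<longrightarrow> card ((\<omega>!i - \<omega>!Suc i) \<union> (\<omega>!Suc i - \<omega>!i)) = 1)"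

definition path_from_to :: "nat \<Rightarrow> config list \<Rightarrow> config \<Rightarrow> config \<Rightarrow> bool" where
  "path_from_to L \<omega> \<sigma> \<sigma>' \<longleftrightarrow> is_path L \<omega> \<and> hd \<omega> = \<sigma> \<and> last \<omega> = \<sigma>'"

definition height :: "config list \<Rightarrow> int" where
  "height \<omega> = Max (H ` set \<omega>)"

definition comm_height :: "nat \<Rightarrow> config \<Rightarrow> config \<Rightarrow> int" where
  "comm_height L \<sigma> \<sigma>' = Min {height \<omega> | \<omega>. path_from_to L \<omega> \<sigma> \<sigma>'}"

definition cycle_e :: "nat \<Rightarrow> config set" where
  "cycle_e L = {\<zeta> \<in> hc L. comm_height L \<zeta> (even_conf L) < comm_height L (even_conf L) (odd_conf L)}"

definition cycle_o :: "nat \<Rightarrow> config set" where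
  "cycle_o L = {\<zeta> \<in> hc L. comm_height L \<zeta> (odd_conf L) < comm_height L (even_conf L) (odd_conf L)}"

end

theory Submission
  imports Defs
begin

text \<open>
  Each column of a hard-core configuration is an independent set of the cycle of length \<open>L\<close>,
  so it carries at most \<open>L/2\<close> particles, with equality only for the two alternating patterns.
  Hence if \<open>\<Delta>H(\<sigma>) < L\<close>, some column of \<sigma> already agrees with a chessboard configuration.
  Next to a column that agrees with the chessboard, a vacant chessboard site has at most one
  occupied neighbour, namely the one in the following column; removing that particle and then
  adding the vacant site raises the energy by at most one and never increases it overall.
  Sweeping across the torus this way fills the whole chessboard.
\<close>

lemma cyc_nb_parity:
  assumes "even L" "a < L" "b < L" "cyc_nb L a b"
  shows "even a \<noteq> even b"
proof -
  have step: "even x \<noteq> even (Suc x mod L)" if "x < L" for x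
  proof (cases "Suc x = L")
    case True
    then show ?thesis using assms(1) by auto
  next
    case False
    then show ?thesis using that by simp
  qed
  show ?thesis
    using assms(4) step[OF assms(2)] step[OF assms(3)] unfolding cyc_nb_def by auto
qed

lemma cyc_nb_Suc_mod:
  assumes "a < L" "x < L" "cyc_nb L (Suc a mod L) x"
  shows "x = a \<or> x = Suc (Suc a mod L) mod L"
  using assms unfolding cyc_nb_def by (auto simp: mod_Suc split: if_splits)

lemma adj_parity: "even L \<Longrightarrow> adj L v w \<Longrightarrow> even (fst v + snd v) \<noteq> even (fst w + snd w)"
  unfolding adj_def sites_def using cyc_nb_parity[of L] by auto

lemma adj_sym: "adj L v w \<longleftrightarrow> adj L w v"
  unfolding adj_def cyc_nb_def by auto

lemma adj_Suc_fst: "x < L \<Longrightarrow> y < L \<Longrightarrow> adj L (x, y) (Suc x mod L, y)"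
  unfolding adj_def sites_def cyc_nb_def by auto

lemma adj_Suc_snd: "x < L \<Longrightarrow> y < L \<Longrightarrow> adj L (x, y) (x, Suc y mod L)"
  unfolding adj_def sites_def cyc_nb_def by auto

lemma finite_hc: "\<tau> \<in> hc L \<Longrightarrow> finite \<tau>"
  unfolding hc_def sites_def using finite_subset by blast

lemma finite_hc_set: "finite (hc L)"
proof -
  have "hc L \<subseteq> Pow (sites L)" unfolding hc_def by auto
  then show ?thesis using finite_subset unfolding sites_def by blast
qed

lemma independent_cycle_card:
  fixes A :: "nat set"
  assumes A: "A \<subseteq> {..<L}" and indep: "\<forall>y\<in>A. Suc y mod L \<notin> A"
  shows "2 * card A \<le> L"
    and "2 * card A = L \<Longrightarrow> \<exists>p. A = {y. y < L \<and> even y = p}"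
proof -
  \<comment> \<open>\<open>A\<close> and its rotation \<open>s ` A\<close> are disjoint; when they fill the cycle, membership alternates.\<close>
  define s where "s y = Suc y mod L" for y
  have inj: "inj_on s {..<L}"
    unfolding s_def inj_on_def by (auto simp: mod_Suc split: if_splits)
  have sA: "s ` A \<subseteq> {..<L}" and disj: "A \<inter> s ` A = {}"
    using A indep unfolding s_def by auto
  have card_sA: "card (s ` A) = card A"
    using card_image inj_on_subset[OF inj A] by blast
  have fin: "finite A" "finite (s ` A)"
    using A sA by (meson finite_lessThan finite_subset)+
  have card_Un: "card (A \<union> s ` A) = 2 * card A"
    using card_Un_disjoint[OF fin disj] card_sA by simp
  then show "2 * card A \<le> L"
    using card_mono[of "{..<L}" "A \<union> s ` A"] A sA by auto
  assume "2 * card A = L"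
  then have cover: "A \<union> s ` A = {..<L}"
    using card_Un A sA by (intro card_subset_eq) auto
  have alternate: "Suc y \<in> A \<longleftrightarrow> y \<notin> A" if "Suc y < L" for y
  proof
    show "Suc y \<in> A \<Longrightarrow> y \<notin> A" using indep that by auto
  next
    assume "y \<notin> A"
    have "s y \<in> A \<union> s ` A" using cover that unfolding s_def by auto
    moreover have "s y \<notin> s ` A"
    proof
      assume "s y \<in> s ` A"
      then obtain z where "z \<in> A" "s y = s z" by blast
      with inj A that have "y = z" by (auto dest: inj_onD)
      with \<open>y \<notin> A\<close> \<open>z \<in> A\<close> show False by simp
    qed
    ultimately show "Suc y \<in> A" using that unfolding s_def by auto
  qed
  have parity: "y \<in> A \<longleftrightarrow> even y = (0 \<in> A)" if "y < L" for y
    using that by (induction y) (auto simp: alternate)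
  have "A = {y. y < L \<and> even y = (0 \<in> A)}"
  proof (rule set_eqI)
    show "y \<in> A \<longleftrightarrow> y \<in> {y. y < L \<and> even y = (0 \<in> A)}" for y
      using A parity[of y] by auto
  qed
  then show "\<exists>p. A = {y. y < L \<and> even y = p}" by blast
qed

definition chess :: "nat \<Rightarrow> bool \<Rightarrow> config" where
  "chess L q = {v \<in> sites L. even (fst v + snd v) = q}"

lemma chess_True: "chess L True = even_conf L"
  and chess_False: "chess L False = odd_conf L"
  unfolding chess_def even_conf_def odd_conf_def by auto

definition full_column :: "nat \<Rightarrow> bool \<Rightarrow> config \<Rightarrow> nat \<Rightarrow> bool" where
  "full_column L q \<tau> x \<longleftrightarrow> (\<forall>y<L. (x, y) \<in> \<tau> \<longleftrightarrow> even (x + y) = q)"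

lemma all_full_columns_imp_chess:
  assumes "\<tau> \<subseteq> sites L" "\<forall>x<L. full_column L q \<tau> x"
  shows "\<tau> = chess L q"
  using assms unfolding full_column_def chess_def sites_def by auto

lemma full_column_preserved:
  assumes "full_column L q \<tau> x" "x < L" "\<tau> \<inter> chess L q \<subseteq> \<tau>'" "\<tau>' \<subseteq> \<tau> \<union> chess L q"
  shows "full_column L q \<tau>' x"
  using assms unfolding full_column_def chess_def sites_def by auto

lemma card_eq_sum_columns:
  assumes "\<tau> \<subseteq> sites L"
  shows "card \<tau> = (\<Sum>x<L. card {y. (x, y) \<in> \<tau>})"
proof -
  have "\<tau> = Sigma {..<L} (\<lambda>x. {y. (x, y) \<in> \<tau>})"
    using assms unfolding sites_def by fastforce
  moreover have "finite {y. (x, y) \<in> \<tau>}" for x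
    using assms unfolding sites_def by (intro finite_subset[OF _ finite_lessThan[of L]]) auto
  ultimately show ?thesis
    by (metis card_SigmaI finite_lessThan)
qed

lemma card_even_conf_ge: "even L \<Longrightarrow> L * (L div 2) \<le> card (even_conf L)"
proof -
  assume "even L"
  have "L div 2 \<le> card {y. (x, y) \<in> even_conf L}" if "x < L" for x
  proof -
    let ?E = "{y. (x, y) \<in> even_conf L}"
    have "(\<lambda>k. 2 * k + x mod 2) ` {..<L div 2} \<subseteq> ?E"
      using \<open>even L\<close> that unfolding even_conf_def sites_def by auto
    moreover have "inj_on (\<lambda>k. 2 * k + x mod 2) {..<L div 2}"
      by (auto simp: inj_on_def)
    moreover have "finite ?E"
      unfolding even_conf_def sites_def by (intro finite_subset[OF _ finite_lessThan[of L]]) auto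
    ultimately show ?thesis
      using card_inj_on_le by fastforce
  qed
  then have "(\<Sum>x<L. L div 2) \<le> (\<Sum>x<L. card {y. (x, y) \<in> even_conf L})"
    by (intro sum_mono) auto
  then show ?thesis
    using card_eq_sum_columns[of "even_conf L" L] unfolding even_conf_def by auto
qed

lemma column_card_lt_half:
  assumes "even L" "\<sigma> \<in> hc L" "x < L" "\<forall>q. \<not> full_column L q \<sigma> x"
  shows "card {y. (x, y) \<in> \<sigma>} + 1 \<le> L div 2"
proof -
  let ?A = "{y. (x, y) \<in> \<sigma>}"
  have A: "?A \<subseteq> {..<L}" using assms(2) unfolding hc_def sites_def by auto
  have indep: "\<forall>y\<in>?A. Suc y mod L \<notin> ?A"
    using assms(2,3) A adj_Suc_snd unfolding hc_def by blast
  have "2 * card ?A \<noteq> L"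
  proof
    assume "2 * card ?A = L"
    then obtain p where "?A = {y. y < L \<and> even y = p}"
      using independent_cycle_card(2)[OF A indep] by blast
    then have "full_column L (even x = p) \<sigma> x"
      unfolding full_column_def by auto
    with assms(4) show False by blast
  qed
  moreover obtain k where "L = 2 * k"
    using \<open>even L\<close> by blast
  ultimately have "card ?A < k"
    using independent_cycle_card(1)[OF A indep] by linarith
  with \<open>L = 2 * k\<close> show ?thesis by simp
qed

lemma exists_full_column:
  assumes "even L" "\<sigma> \<in> hc L" "DeltaH L \<sigma> < int L"
  shows "\<exists>x<L. \<exists>q. full_column L q \<sigma> x"
proof (rule ccontr)
  assume "\<not> ?thesis"
  then have "(\<Sum>x<L. card {y. (x, y) \<in> \<sigma>} + 1) \<le> (\<Sum>x<L. L div 2)"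
    using column_card_lt_half[OF assms(1,2)] by (intro sum_mono) auto
  then have "card \<sigma> + L \<le> L * (L div 2)"
    using card_eq_sum_columns[of \<sigma> L] assms(2) unfolding hc_def sum.distrib by simp
  also have "\<dots> \<le> card (even_conf L)"
    using card_even_conf_ge[OF assms(1)] .
  finally show False
    using assms(3) unfolding DeltaH_def H_def by simp
qed

inductive reach :: "nat \<Rightarrow> int \<Rightarrow> config \<Rightarrow> config \<Rightarrow> bool" for L :: nat and h :: int where
  reach_refl: "\<sigma> \<in> hc L \<Longrightarrow> H \<sigma> \<le> h \<Longrightarrow> reach L h \<sigma> \<sigma>"
| reach_step: "\<sigma> \<in> hc L \<Longrightarrow> H \<sigma> \<le> h \<Longrightarrow> card ((\<sigma> - \<sigma>') \<union> (\<sigma>' - \<sigma>)) = 1 \<Longrightarrow>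
    reach L h \<sigma>' \<tau> \<Longrightarrow> reach L h \<sigma> \<tau>"

lemma reach_trans: "reach L h \<sigma> \<tau> \<Longrightarrow> reach L h \<tau> \<rho> \<Longrightarrow> reach L h \<sigma> \<rho>"
  by (induction rule: reach.induct) (auto intro: reach.intros)

lemma is_path_Cons:
  assumes "is_path L \<omega>" "\<sigma> \<in> hc L" "card ((\<sigma> - hd \<omega>) \<union> (hd \<omega> - \<sigma>)) = 1"
  shows "is_path L (\<sigma> # \<omega>)"
proof -
  have "card (((\<sigma> # \<omega>) ! i - (\<sigma> # \<omega>) ! Suc i) \<union> ((\<sigma> # \<omega>) ! Suc i - (\<sigma> # \<omega>) ! i)) = 1"
    if "Suc i < length (\<sigma> # \<omega>)" for i
    using that assms by (cases i) (auto simp: is_path_def hd_conv_nth)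
  with assms show ?thesis
    unfolding is_path_def by auto
qed

lemma reach_imp_path:
  assumes "reach L h \<sigma> \<tau>"
  shows "\<exists>\<omega>. path_from_to L \<omega> \<sigma> \<tau> \<and> height \<omega> \<le> h"
  using assms
proof (induction rule: reach.induct)
  case (reach_refl \<sigma>)
  then show ?case
    by (intro exI[of _ "[\<sigma>]"]) (auto simp: path_from_to_def is_path_def height_def)
next
  case (reach_step \<sigma> \<sigma>' \<tau>)
  then obtain \<omega> where \<omega>: "path_from_to L \<omega> \<sigma>' \<tau>" "height \<omega> \<le> h"
    by blast
  then have "\<omega> \<noteq> []"
    unfolding path_from_to_def is_path_def by auto
  then have "path_from_to L (\<sigma> # \<omega>) \<sigma> \<tau>"
    using \<omega>(1) is_path_Cons[of L \<omega> \<sigma>] reach_step(1,3)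
    unfolding path_from_to_def by auto
  moreover have "height (\<sigma> # \<omega>) \<le> h"
    using \<omega>(2) \<open>\<omega> \<noteq> []\<close> reach_step(2) unfolding height_def by simp
  ultimately show ?case by blast
qed

lemma reach_insert:
  assumes "\<tau> \<in> hc L" "H \<tau> \<le> h" "v \<notin> \<tau>" "reach L h (insert v \<tau>) \<rho>"
  shows "reach L h \<tau> \<rho>"
proof -
  have "(\<tau> - insert v \<tau>) \<union> (insert v \<tau> - \<tau>) = {v}"
    using assms(3) by auto
  then have "card ((\<tau> - insert v \<tau>) \<union> (insert v \<tau> - \<tau>)) = 1"
    by simp
  from reach_step[OF assms(1,2) this assms(4)] show ?thesis .
qed

lemma reach_remove:
  assumes "\<tau> \<in> hc L" "H \<tau> \<le> h" "w \<in> \<tau>" "reach L h (\<tau> - {w}) \<rho>"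
  shows "reach L h \<tau> \<rho>"
proof -
  have "(\<tau> - (\<tau> - {w})) \<union> ((\<tau> - {w}) - \<tau>) = {w}"
    using assms(3) by auto
  then have "card ((\<tau> - (\<tau> - {w})) \<union> ((\<tau> - {w}) - \<tau>)) = 1"
    by simp
  from reach_step[OF assms(1,2) this assms(4)] show ?thesis .
qed

lemma reach_swap:
  assumes hc: "\<tau> \<in> hc L" "insert v (\<tau> - {w}) \<in> hc L"
    and "v \<notin> \<tau>" and h: "H \<tau> + 1 \<le> h"
  shows "reach L h \<tau> (insert v (\<tau> - {w}))" and "H (insert v (\<tau> - {w})) \<le> H \<tau>"
proof -
  have fin: "finite \<tau>" using finite_hc[OF hc(1)] .
  have "card \<tau> \<le> Suc (card (\<tau> - {w}))"
    using fin by (cases "w \<in> \<tau>") (auto simp: card_Diff_singleton_if)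
  also have "\<dots> = card (insert v (\<tau> - {w}))"
    using fin \<open>v \<notin> \<tau>\<close> by simp
  finally show H_le: "H (insert v (\<tau> - {w})) \<le> H \<tau>"
    unfolding H_def by simp
  have "\<tau> - {w} \<in> hc L"
    using hc(1) unfolding hc_def by blast
  moreover have "reach L h (insert v (\<tau> - {w})) (insert v (\<tau> - {w}))"
    using reach_refl[OF hc(2)] H_le h by simp
  ultimately have to_swap: "reach L h (\<tau> - {w}) (insert v (\<tau> - {w}))" if "H (\<tau> - {w}) \<le> h"
    using reach_insert that \<open>v \<notin> \<tau>\<close> by blast
  show "reach L h \<tau> (insert v (\<tau> - {w}))"
  proof (cases "w \<in> \<tau>")
    case True
    then have "H (\<tau> - {w}) = H \<tau> + 1"
      using card.remove[OF fin True] unfolding H_def by simp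
    with h show ?thesis
      using reach_remove[OF hc(1) _ True to_swap] by simp
  next
    case False
    with h to_swap show ?thesis by simp
  qed
qed

lemma insert_Diff_hc:
  assumes "even L" "\<tau> \<in> hc L" "v \<in> sites L" "\<forall>u\<in>\<tau>. adj L v u \<longrightarrow> u = w"
  shows "insert v (\<tau> - {w}) \<in> hc L"
proof -
  have indep: "\<forall>x\<in>\<tau>. \<forall>z\<in>\<tau>. \<not> adj L x z" and "\<tau> \<subseteq> sites L"
    using assms(2) unfolding hc_def by auto
  have "\<not> adj L v v"
    using adj_parity[OF assms(1)] by blast
  have "\<not> adj L x z" if "x \<in> insert v (\<tau> - {w})" "z \<in> insert v (\<tau> - {w})" for x z
    using that indep \<open>\<not> adj L v v\<close> assms(4) adj_sym[of L x z] by auto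
  with \<open>\<tau> \<subseteq> sites L\<close> assms(3) show ?thesis
    unfolding hc_def by auto
qed

lemma unique_neighbour_beside_full_column:
  assumes "even L" "\<tau> \<in> hc L" "a < L" "full_column L q \<tau> a"
    and "y < L" "even (Suc a mod L + y) = q"
    and "u \<in> \<tau>" "adj L (Suc a mod L, y) u"
  shows "u = (Suc (Suc a mod L) mod L, y)"
proof -
  define d where "d = Suc a mod L"
  have "d < L" using assms(3) unfolding d_def by simp
  have "even a \<noteq> even d"
    using cyc_nb_parity[OF assms(1,3) \<open>d < L\<close>] unfolding d_def cyc_nb_def by simp
  have indep: "\<forall>x\<in>\<tau>. \<forall>z\<in>\<tau>. \<not> adj L x z"
    using assms(2) unfolding hc_def by auto
  obtain x y' where u: "u = (x, y')" "x < L" "y' < L"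
    using assms(8) unfolding adj_def sites_def by auto
  \<comment> \<open>The other neighbours are \<open>(a, y)\<close>, of the wrong parity, and \<open>(d, y \<plusminus> 1)\<close>, adjacent to occupied sites of column \<open>a\<close>.\<close>
  consider "x = d" "cyc_nb L y y'" | "y' = y" "cyc_nb L d x"
    using assms(8) unfolding adj_def u d_def by auto
  then show ?thesis
  proof cases
    case 1
    then have "even (a + y') = q"
      using cyc_nb_parity[OF assms(1,5) \<open>y' < L\<close>] \<open>even a \<noteq> even d\<close> assms(6)
      unfolding d_def by auto
    then have "(a, y') \<in> \<tau>"
      using assms(4) \<open>y' < L\<close> unfolding full_column_def by blast
    moreover have "adj L (a, y') u"
      using adj_Suc_fst[OF assms(3) \<open>y' < L\<close>] 1 u unfolding d_def by simp
    ultimately show ?thesis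
      using indep assms(7) by blast
  next
    case 2
    have "(a, y) \<notin> \<tau>"
      using assms(4,5,6) \<open>even a \<noteq> even d\<close> unfolding full_column_def d_def by auto
    then have "x \<noteq> a"
      using assms(7) u 2 by auto
    then show ?thesis
      using cyc_nb_Suc_mod[OF assms(3) \<open>x < L\<close>] 2 u unfolding d_def by auto
  qed
qed

lemma swap_beside_full_column:
  assumes "even L" "\<tau> \<in> hc L" "a < L" "full_column L q \<tau> a"
    and "y < L" "(Suc a mod L, y) \<in> chess L q - \<tau>" "H \<tau> + 1 \<le> h"
  obtains \<tau>' where "\<tau>' \<in> hc L" "reach L h \<tau> \<tau>'" "H \<tau>' \<le> H \<tau>"
    "\<tau> \<inter> chess L q \<subseteq> \<tau>'" "\<tau>' \<subseteq> \<tau> \<union> chess L q" "(Suc a mod L, y) \<in> \<tau>'"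
proof -
  define v where "v = (Suc a mod L, y)"
  define w where "w = (Suc (Suc a mod L) mod L, y)"
  have "v \<in> sites L" "even (Suc a mod L + y) = q" "v \<notin> \<tau>"
    using assms(6) unfolding v_def chess_def by auto
  then have "insert v (\<tau> - {w}) \<in> hc L"
    using unique_neighbour_beside_full_column[OF assms(1-5)] assms(1,2)
    by (intro insert_Diff_hc) (auto simp: v_def w_def)
  moreover have "w \<notin> chess L q"
    using adj_parity[OF assms(1) adj_Suc_fst[of "Suc a mod L" L y]] assms(3,5,6)
    unfolding w_def chess_def by auto
  ultimately show ?thesis
    using that reach_swap[OF assms(2) _ \<open>v \<notin> \<tau>\<close> assms(7)] assms(6)
    unfolding v_def by blast
qed

lemma exists_vacancy_beside_full_column:
  assumes "even L" "\<tau> \<in> hc L" "a < L" "full_column L q \<tau> a"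
    and "\<not> full_column L q \<tau> (Suc a mod L)"
  shows "\<exists>y<L. (Suc a mod L, y) \<in> chess L q - \<tau>"
proof -
  define d where "d = Suc a mod L"
  have "d < L" using assms(3) unfolding d_def by simp
  obtain y where y: "y < L" "(d, y) \<in> \<tau> \<longleftrightarrow> even (d + y) \<noteq> q"
    using assms(5) unfolding full_column_def d_def by blast
  have "(d, y) \<notin> \<tau>"
  proof
    assume "(d, y) \<in> \<tau>"
    moreover have "even a \<noteq> even d"
      using cyc_nb_parity[OF assms(1,3) \<open>d < L\<close>] unfolding d_def cyc_nb_def by simp
    then have "(a, y) \<in> \<tau>"
      using y \<open>(d, y) \<in> \<tau>\<close> assms(4) unfolding full_column_def by auto
    moreover have "adj L (a, y) (d, y)"
      using adj_Suc_fst[OF assms(3) y(1)] unfolding d_def .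
    ultimately show False
      using assms(2) unfolding hc_def by blast
  qed
  with y \<open>d < L\<close> show ?thesis
    unfolding chess_def sites_def d_def by auto
qed

lemma exists_exit_mod:
  fixes P :: "nat \<Rightarrow> bool"
  assumes "P x" "x < L" "c < L" "\<not> P c"
  shows "\<exists>a<L. P a \<and> \<not> P (Suc a mod L)"
proof (rule ccontr)
  assume "\<not> ?thesis"
  then have step: "a < L \<Longrightarrow> P a \<Longrightarrow> P (Suc a mod L)" for a
    by blast
  have "P ((x + k) mod L)" for k
  proof (induction k)
    case 0
    then show ?case using assms(1,2) by simp
  next
    case (Suc k)
    then show ?case
      using step[of "(x + k) mod L"] assms(2) by (simp add: mod_Suc_eq)
  qed
  from this[of "c + L - x"] assms(2-4) show False
    by simp
qed

lemma reach_chess_from_full_column: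
  assumes "even L" "x < L" "\<tau> \<in> hc L" "full_column L q \<tau> x" "H \<tau> + 1 \<le> h"
  shows "reach L h \<tau> (chess L q)"
  using assms(3-5)
proof (induction "card (chess L q - \<tau>)" arbitrary: \<tau> rule: less_induct)
  case less
  show ?case
  proof (cases "\<forall>c<L. full_column L q \<tau> c")
    case True
    then have "\<tau> = chess L q"
      using all_full_columns_imp_chess less.prems(1) unfolding hc_def by blast
    with less.prems show ?thesis
      by (auto intro: reach_refl)
  next
    case False
    then obtain a where a: "a < L" "full_column L q \<tau> a" "\<not> full_column L q \<tau> (Suc a mod L)"
      using exists_exit_mod[of "full_column L q \<tau>", OF less.prems(2) assms(2)] by blast
    then obtain y where y: "y < L" "(Suc a mod L, y) \<in> chess L q - \<tau>"
      using exists_vacancy_beside_full_column[OF assms(1) less.prems(1)] by blast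
    obtain \<tau>' where \<tau>': "\<tau>' \<in> hc L" "reach L h \<tau> \<tau>'" "H \<tau>' \<le> H \<tau>"
      "\<tau> \<inter> chess L q \<subseteq> \<tau>'" "\<tau>' \<subseteq> \<tau> \<union> chess L q" "(Suc a mod L, y) \<in> \<tau>'"
      using swap_beside_full_column[OF assms(1) less.prems(1) a(1,2) y less.prems(3)] .
    have "chess L q - \<tau>' \<subset> chess L q - \<tau>"
      using \<tau>'(4,6) y(2) by blast
    then have "card (chess L q - \<tau>') < card (chess L q - \<tau>)"
      by (intro psubset_card_mono) (auto simp: chess_def sites_def)
    moreover have "full_column L q \<tau>' x"
      using full_column_preserved[OF less.prems(2) assms(2) \<tau>'(4,5)] .
    ultimately have "reach L h \<tau>' (chess L q)"
      using less.hyps \<tau>'(1,3) less.prems(3) by force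
    with \<tau>'(2) show ?thesis
      using reach_trans by blast
  qed
qed

lemma comm_height_le_height:
  assumes "path_from_to L \<omega> \<sigma> \<tau>"
  shows "comm_height L \<sigma> \<tau> \<le> height \<omega>"
proof -
  have "{height \<omega> | \<omega>. path_from_to L \<omega> \<sigma> \<tau>} \<subseteq> H ` hc L"
  proof clarify
    fix \<omega>' assume "path_from_to L \<omega>' \<sigma> \<tau>"
    then have "\<omega>' \<noteq> []" "set \<omega>' \<subseteq> hc L"
      unfolding path_from_to_def is_path_def by auto
    moreover have "Max (H ` set \<omega>') \<in> H ` set \<omega>'"
      using \<open>\<omega>' \<noteq> []\<close> by (intro Max_in) auto
    ultimately show "height \<omega>' \<in> H ` hc L"
      unfolding height_def by blast
  qed
  then have "finite {height \<omega> | \<omega>. path_from_to L \<omega> \<sigma> \<tau>}"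
    using finite_hc_set finite_subset by blast
  with assms show ?thesis
    unfolding comm_height_def by (intro Min_le) auto
qed

theorem lemma4p1:
  fixes L :: nat and \<sigma> :: config
  assumes "even L" and "L \<ge> 6"
    and known: "comm_height L (even_conf L) (odd_conf L) - H (even_conf L) = int L + 1"
    and "\<sigma> \<in> hc L"
    and "DeltaH L \<sigma> < int L"
  shows "(\<exists>\<omega>. (path_from_to L \<omega> \<sigma> (even_conf L) \<or> path_from_to L \<omega> \<sigma> (odd_conf L))
              \<and> height \<omega> \<le> H \<sigma> + 1)
         \<and> (\<sigma> \<in> cycle_e L \<or> \<sigma> \<in> cycle_o L)"
proof -
  \<comment> \<open>The argument works for every even \<open>L\<close>.\<close>
  obtain x q where "x < L" "full_column L q \<sigma> x"
    using exists_full_column[OF assms(1,4,5)] by blast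
  then have "reach L (H \<sigma> + 1) \<sigma> (chess L q)"
    using reach_chess_from_full_column[OF assms(1)] assms(4) by blast
  then obtain \<omega> where \<omega>: "path_from_to L \<omega> \<sigma> (chess L q)" "height \<omega> \<le> H \<sigma> + 1"
    using reach_imp_path by blast
  have chess_cases: "chess L q = even_conf L \<or> chess L q = odd_conf L"
    by (cases q) (simp_all add: chess_True chess_False)
  have "H \<sigma> + 1 < comm_height L (even_conf L) (odd_conf L)"
    using known assms(5) unfolding DeltaH_def by linarith
  then have "comm_height L \<sigma> (chess L q) < comm_height L (even_conf L) (odd_conf L)"
    using comm_height_le_height[OF \<omega>(1)] \<omega>(2) by linarith
  with chess_cases assms(4) have "\<sigma> \<in> cycle_e L \<or> \<sigma> \<in> cycle_o L"
    unfolding cycle_e_def cycle_o_def by auto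
  with \<omega> chess_cases show ?thesis
    by auto
qed

end
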